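(* There exists $\theta\in(0,1/\sqrt3)$ such that for every $\eta>0$, every $\rho>0$ and every $\theta$-bad plane $L$ for $Q_\rho$ (with unit normal $\nu=(\nu_1,\nu_2,\nu_3)$) the following holds: there is exactly one index $k\in\{1,2,3\}$ with $|\nu_k|\ge\theta$, and $$\text{either}\quad -\tfrac{3\rho}{4}<x\cdot e_k<-\tfrac{\rho}{4}\ \ \forall x\in L\cap Q_{3\rho},\qquad\text{or}\quad \tfrac{\rho}{4}<x\cdot e_k<\tfrac{3\rho}{4}\ \ \forall x\in L\cap Q_{3\rho}.$$
   Context: Here $Q_\rho=\rho[-\frac12,\frac12)^3\subset\mathbb R^3$ is centered at the origin and $Q_{3\rho}=3\rho[-\frac12,\frac12)^3$. For $A\subset\mathbb R^3$ and $s>0$, $(A)_s:=\{x:\mathrm{dist}(x,A)<s\}$. Given $\theta\in(0,1/\sqrt3)$ and $\eta>0$, a plane $L\subset\mathbb R^3$ with unit normal $\nu=(\nu_1,\nu_2,\nu_3)$ and $(L)_{3\eta\rho}\cap Q_\rho\ne\emptyset$ is called $\theta$-good for $Q_\rho$ if either (1) there are $i\ne j$ in $\{1,2,3\}$ with $|\nu_i|,|\nu_j|\ge\theta$, or (2) there is $k$ with $|\nu_k|\ge\theta$ and $\mathrm{dist}\big(L\cap Q_{3\rho},\{x_k=-\rho/2\}\cup\{x_k=\rho/2\}\big)\ge20\theta\rho$. Such a plane which is not $\theta$-good is called $\theta$-bad for $Q_\rho$. $e_k$ is the $k$-th standard basis vector. *)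

theory Defs
  imports "HOL-Analysis.Analysis"
begin

definition cube :: "real \<Rightarrow> (real^3) set" where
  "cube \<rho> = {x. \<forall>i. - \<rho> / 2 \<le> x $ i \<and> x $ i < \<rho> / 2}"

definition nbhd :: "(real^3) set \<Rightarrow> real \<Rightarrow> (real^3) set" where
  "nbhd A s = {x. infdist x A < s}"

definition plane :: "real^3 \<Rightarrow> real \<Rightarrow> (real^3) set" where
  "plane \<nu> c = {x. \<nu> \<bullet> x = c}"

definition faces :: "3 \<Rightarrow> real \<Rightarrow> (real^3) set" where
  "faces k \<rho> = {x. x \<bullet> axis k 1 = - \<rho> / 2} \<union> {x. x \<bullet> axis k 1 = \<rho> / 2}"

text \<open>dist(A,B) \<ge> d, with the convention inf of the empty set = +infinity.\<close>
definition set_dist_ge :: "(real^3) set \<Rightarrow> (real^3) set \<Rightarrow> real \<Rightarrow> bool" where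
  "set_dist_ge A B d \<longleftrightarrow> (\<forall>x\<in>A. \<forall>y\<in>B. d \<le> dist x y)"

definition admissible_plane :: "real \<Rightarrow> real \<Rightarrow> real^3 \<Rightarrow> real \<Rightarrow> bool" where
  "admissible_plane \<eta> \<rho> \<nu> c \<longleftrightarrow> nbhd (plane \<nu> c) (3 * \<eta> * \<rho>) \<inter> cube \<rho> \<noteq> {}"

definition theta_good :: "real \<Rightarrow> real \<Rightarrow> real \<Rightarrow> real^3 \<Rightarrow> real \<Rightarrow> bool" where
  "theta_good \<theta> \<eta> \<rho> \<nu> c \<longleftrightarrow> admissible_plane \<eta> \<rho> \<nu> c \<and>
     ((\<exists>i j. i \<noteq> j \<and> \<bar>\<nu> $ i\<bar> \<ge> \<theta> \<and> \<bar>\<nu> $ j\<bar> \<ge> \<theta>) \<or>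
      (\<exists>k. \<bar>\<nu> $ k\<bar> \<ge> \<theta> \<and>
           set_dist_ge (plane \<nu> c \<inter> cube (3 * \<rho>)) (faces k \<rho>) (20 * \<theta> * \<rho>)))"

definition theta_bad :: "real \<Rightarrow> real \<Rightarrow> real \<Rightarrow> real^3 \<Rightarrow> real \<Rightarrow> bool" where
  "theta_bad \<theta> \<eta> \<rho> \<nu> c \<longleftrightarrow> admissible_plane \<eta> \<rho> \<nu> c \<and> \<not> theta_good \<theta> \<eta> \<rho> \<nu> c"

end

theory Submission
  imports Defs
begin

text \<open>Take \<open>\<theta> = 1/200\<close>. A unit vector in \<open>\<real>\<^sup>3\<close> has a component of size at least
  \<open>1/\<surd>3 > \<theta>\<close>, and a bad plane cannot have two such components, so there is exactly one
  such index \<open>k\<close>, the other two components are smaller than \<open>\<theta>\<close>, and therefore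
  \<open>|\<nu>\<^sub>k| \<ge> 1/2\<close>. Hence the plane is nearly orthogonal to \<open>e\<^sub>k\<close>: by \<open>\<nu> \<bullet> (z - x) = 0\<close>,
  two of its points in \<open>Q\<^sub>3\<^sub>\<rho>\<close> differ in their \<open>k\<close>-th coordinate by at most \<open>12\<theta>\<rho>\<close>.
  Badness also provides a point of \<open>L \<inter> Q\<^sub>3\<^sub>\<rho>\<close> within \<open>20\<theta>\<rho>\<close> of a face \<open>{x\<^sub>k = \<plusminus>\<rho>/2}\<close>,
  so all of \<open>L \<inter> Q\<^sub>3\<^sub>\<rho>\<close> lies within \<open>32\<theta>\<rho> < \<rho>/4\<close> of that face.\<close>

lemma sum_square_components_eq_norm_square:
  fixes \<nu> :: "real^'n"
  shows "(\<Sum>i\<in>UNIV. (\<nu> $ i)\<^sup>2) = (norm \<nu>)\<^sup>2"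
  unfolding power2_norm_eq_inner inner_vec_def by (simp add: power2_eq_square)

lemma unit_vector_large_component:
  fixes \<nu> :: "real^'n"
  assumes "norm \<nu> = 1" and "real CARD('n) * \<theta>\<^sup>2 \<le> 1"
  shows "\<exists>k. \<theta> \<le> \<bar>\<nu> $ k\<bar>"
proof (rule ccontr)
  assume "\<not> ?thesis"
  then have "\<bar>\<nu> $ i\<bar>\<^sup>2 < \<theta>\<^sup>2" for i
    by (intro power_strict_mono) (auto simp: not_le)
  then have "(\<Sum>i\<in>UNIV. \<bar>\<nu> $ i\<bar>\<^sup>2) < (\<Sum>i\<in>(UNIV::'n set). \<theta>\<^sup>2)"
    by (rule sum_strict_mono[rotated 2]) auto
  then show False
    using assms by (simp add: sum_square_components_eq_norm_square)
qed

lemma unit_vector_dominant_component: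
  fixes \<nu> :: "real^'n"
  assumes "norm \<nu> = 1" and small: "\<And>j. j \<noteq> k \<Longrightarrow> \<bar>\<nu> $ j\<bar> \<le> \<theta>"
  shows "1 - (real CARD('n) - 1) * \<theta>\<^sup>2 \<le> (\<nu> $ k)\<^sup>2"
proof -
  have "(\<nu> $ j)\<^sup>2 \<le> \<theta>\<^sup>2" if "j \<in> UNIV - {k}" for j
    using power_mono[OF small abs_ge_zero, of j 2] that by simp
  then have "(\<Sum>j\<in>UNIV - {k}. (\<nu> $ j)\<^sup>2) \<le> real (card (UNIV - {k})) * \<theta>\<^sup>2"
    by (rule sum_bounded_above)
  moreover have "1 = (\<nu> $ k)\<^sup>2 + (\<Sum>j\<in>UNIV - {k}. (\<nu> $ j)\<^sup>2)"
    using assms(1) sum.remove[of UNIV k "\<lambda>j. (\<nu> $ j)\<^sup>2"]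
    by (simp add: sum_square_components_eq_norm_square)
  ultimately show ?thesis
    by (simp add: card_Diff_singleton)
qed

lemma inner_eq_0_component_bound:
  fixes \<nu> w :: "real^'n"
  assumes "\<nu> \<bullet> w = 0"
    and small: "\<And>j. j \<noteq> k \<Longrightarrow> \<bar>\<nu> $ j\<bar> \<le> \<theta>"
    and bounded: "\<And>j. \<bar>w $ j\<bar> \<le> d"
  shows "\<bar>\<nu> $ k\<bar> * \<bar>w $ k\<bar> \<le> (real CARD('n) - 1) * \<theta> * d"
proof -
  have "\<nu> $ k * w $ k = - (\<Sum>j\<in>UNIV - {k}. \<nu> $ j * w $ j)"
    using assms(1) by (simp add: inner_vec_def sum.remove[of UNIV k])
  then have "\<bar>\<nu> $ k\<bar> * \<bar>w $ k\<bar> = \<bar>\<Sum>j\<in>UNIV - {k}. \<nu> $ j * w $ j\<bar>"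
    by (simp add: abs_mult[symmetric])
  also have "\<dots> \<le> (\<Sum>j\<in>UNIV - {k}. \<bar>\<nu> $ j * w $ j\<bar>)"
    by (rule sum_abs)
  also have "\<dots> \<le> real (card (UNIV - {k})) * (\<theta> * d)"
    using small bounded by (intro sum_bounded_above) (simp add: abs_mult mult_mono')
  finally show ?thesis
    by (simp add: card_Diff_singleton)
qed

lemma plane_cube_component_variation:
  fixes \<nu> :: "real^3"
  assumes "norm \<nu> = 1" and small: "\<And>j. j \<noteq> k \<Longrightarrow> \<bar>\<nu> $ j\<bar> \<le> \<theta>"
    and "0 \<le> \<theta>" and "\<theta> \<le> 1/2"
    and x: "x \<in> plane \<nu> c \<inter> cube r" and z: "z \<in> plane \<nu> c \<inter> cube r"
  shows "\<bar>z $ k - x $ k\<bar> \<le> 4 * \<theta> * r"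
proof -
  have "\<theta>\<^sup>2 \<le> 1/4"
    using power_mono[OF \<open>\<theta> \<le> 1/2\<close> \<open>0 \<le> \<theta>\<close>, of 2] by (simp add: power_divide)
  then have "\<bar>1/2\<bar> \<le> \<bar>\<nu> $ k\<bar>"
    using unit_vector_dominant_component[OF assms(1), of k \<theta>] small
    unfolding abs_le_square_iff by (simp add: power_divide)
  then have large: "1/2 \<le> \<bar>\<nu> $ k\<bar>"
    by simp
  have "\<nu> \<bullet> (z - x) = 0"
    using x z by (simp add: plane_def inner_diff_right)
  moreover have "\<bar>(z - x) $ j\<bar> \<le> r" for j
  proof -
    have "- r/2 \<le> x $ j" "x $ j < r/2" "- r/2 \<le> z $ j" "z $ j < r/2"
      using x z by (auto simp: cube_def)
    then show ?thesis
      unfolding vector_minus_component abs_le_iff by linarith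
  qed
  ultimately have "\<bar>\<nu> $ k\<bar> * \<bar>z $ k - x $ k\<bar> \<le> 2 * \<theta> * r"
    using inner_eq_0_component_bound[of \<nu> "z - x" k \<theta> r] small by simp
  moreover have "1/2 * \<bar>z $ k - x $ k\<bar> \<le> \<bar>\<nu> $ k\<bar> * \<bar>z $ k - x $ k\<bar>"
    using large by (intro mult_right_mono) auto
  ultimately have "1/2 * \<bar>z $ k - x $ k\<bar> \<le> 2 * \<theta> * r"
    by linarith
  then show ?thesis
    by simp
qed

lemma theta_bad_other_components_small:
  assumes "theta_bad \<theta> \<eta> \<rho> \<nu> c" and "i \<noteq> j" and "\<theta> \<le> \<bar>\<nu> $ i\<bar>"
  shows "\<bar>\<nu> $ j\<bar> < \<theta>"
  using assms unfolding theta_bad_def theta_good_def by (meson not_le)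

lemma theta_bad_near_faces:
  assumes "theta_bad \<theta> \<eta> \<rho> \<nu> c" and "\<theta> \<le> \<bar>\<nu> $ k\<bar>"
  obtains x y where "x \<in> plane \<nu> c \<inter> cube (3 * \<rho>)" and "y \<in> faces k \<rho>"
    and "dist x y < 20 * \<theta> * \<rho>"
  using assms unfolding theta_bad_def theta_good_def set_dist_ge_def by (meson not_le)

lemma mem_faces_iff: "y \<in> faces k \<rho> \<longleftrightarrow> y $ k = - \<rho> / 2 \<or> y $ k = \<rho> / 2"
  by (simp add: faces_def inner_axis)

lemma slab_near_face:
  assumes "y \<in> faces k \<rho>" and near: "\<And>z. z \<in> S \<Longrightarrow> \<bar>z $ k - y $ k\<bar> < \<rho> / 4"
  shows "(\<forall>z \<in> S. - 3 * \<rho> / 4 < z \<bullet> axis k 1 \<and> z \<bullet> axis k 1 < - \<rho> / 4) \<or>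
         (\<forall>z \<in> S. \<rho> / 4 < z \<bullet> axis k 1 \<and> z \<bullet> axis k 1 < 3 * \<rho> / 4)"
  using assms(1) unfolding mem_faces_iff
proof
  assume "y $ k = - \<rho> / 2"
  then have "- 3 * \<rho> / 4 < z $ k \<and> z $ k < - \<rho> / 4" if "z \<in> S" for z
    using near[OF that] unfolding abs_less_iff by linarith
  then show ?thesis by (simp add: inner_axis)
next
  assume "y $ k = \<rho> / 2"
  then have "\<rho> / 4 < z $ k \<and> z $ k < 3 * \<rho> / 4" if "z \<in> S" for z
    using near[OF that] unfolding abs_less_iff by linarith
  then show ?thesis by (simp add: inner_axis)
qed

theorem lemma2p21:
  shows "\<exists>\<theta>::real. 0 < \<theta> \<and> \<theta> < 1 / sqrt 3 \<and>
    (\<forall>\<eta>::real. \<forall>\<rho>::real. \<forall>\<nu>::real^3. \<forall>c::real.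
       \<eta> > 0 \<longrightarrow> \<rho> > 0 \<longrightarrow> norm \<nu> = 1 \<longrightarrow> theta_bad \<theta> \<eta> \<rho> \<nu> c \<longrightarrow>
       (\<exists>!k. \<bar>\<nu> $ k\<bar> \<ge> \<theta>) \<and>
       (\<forall>k. \<bar>\<nu> $ k\<bar> \<ge> \<theta> \<longrightarrow>
          ((\<forall>x \<in> plane \<nu> c \<inter> cube (3 * \<rho>).
              - 3 * \<rho> / 4 < x \<bullet> axis k 1 \<and> x \<bullet> axis k 1 < - \<rho> / 4) \<or>
           (\<forall>x \<in> plane \<nu> c \<inter> cube (3 * \<rho>).
              \<rho> / 4 < x \<bullet> axis k 1 \<and> x \<bullet> axis k 1 < 3 * \<rho> / 4))))"
proof (intro exI[of _ "1/200"] conjI allI impI)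
  have "sqrt 3 < sqrt 4"
    by (intro real_sqrt_less_mono) simp
  then show "0 < (1/200::real)" and "1/200 < 1 / sqrt (3::real)"
    by (simp_all add: field_simps)
  fix \<eta> \<rho> c :: real and \<nu> :: "real^3"
  assume unit: "norm \<nu> = 1" and bad: "theta_bad (1/200) \<eta> \<rho> \<nu> c"
  note small = theta_bad_other_components_small[OF bad]
  obtain k0 where "1/200 \<le> \<bar>\<nu> $ k0\<bar>"
    using unit_vector_large_component[OF unit, of "1/200"] by (auto simp: power2_eq_square)
  with small show "\<exists>!k. 1/200 \<le> \<bar>\<nu> $ k\<bar>"
    by (metis not_le)
  fix k
  assume large: "1/200 \<le> \<bar>\<nu> $ k\<bar>"
  obtain x y where x: "x \<in> plane \<nu> c \<inter> cube (3 * \<rho>)" and y: "y \<in> faces k \<rho>"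
    and "dist x y < \<rho> / 10"
    using theta_bad_near_faces[OF bad large] by auto
  then have xy: "\<bar>x $ k - y $ k\<bar> < \<rho> / 10"
    using component_le_norm_cart[of "x - y" k] by (simp add: dist_norm)
  have variation: "\<bar>z $ k - x $ k\<bar> \<le> 3 * \<rho> / 50" if "z \<in> plane \<nu> c \<inter> cube (3 * \<rho>)" for z
    using plane_cube_component_variation[OF unit _ _ _ x that, where \<theta> = "1/200"] small[OF _ large]
    by (simp add: less_imp_le)
  have "\<bar>z $ k - y $ k\<bar> < \<rho> / 4" if "z \<in> plane \<nu> c \<inter> cube (3 * \<rho>)" for z
    using variation[OF that] xy by linarith
  then show "(\<forall>z \<in> plane \<nu> c \<inter> cube (3 * \<rho>).
              - 3 * \<rho> / 4 < z \<bullet> axis k 1 \<and> z \<bullet> axis k 1 < - \<rho> / 4) \<or>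
           (\<forall>z \<in> plane \<nu> c \<inter> cube (3 * \<rho>).
              \<rho> / 4 < z \<bullet> axis k 1 \<and> z \<bullet> axis k 1 < 3 * \<rho> / 4)"
    by (rule slab_near_face[OF y])
qed

end
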